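(* Let $v\ge 0$. The optimal value of $$\min_{y\in\mathbb{R}^{n^+}}\ \sum_{j=1}^{n^+} y_j^{1/\alpha}\quad\text{s.t.}\quad 0\le y_1\le\cdots\le y_{n^+},\qquad \sum_{j=1}^{n^+} h^+_j y_j=v$$ equals $$v^{1/\alpha}\cdot\frac{J}{\left[\left(\sum_{j=1}^{J}h^+_j\right)^{\frac{1}{1-\alpha}}+\sum_{j=J+1}^{n^+}\left(J^{\alpha}h^+_j\right)^{\frac{1}{1-\alpha}}\right]^{\frac{1-\alpha}{\alpha}}},$$ where $J$ is the transitional index.
   Context: Fix $N\in\mathbb{N}$, $\alpha\in(0,1)$ and an integer $1\le n^+\le N$. A function $f:[0,1]\to\mathbb{R}$ is inverse S-shaped if it is strictly increasing, continuously differentiable, and there is $x_0\in[0,1]$ such that $f'$ is strictly decreasing on $[0,x_0]$ and strictly increasing on $[x_0,1]$. Let $W^+:[0,1]\to[0,1]$ be inverse S-shaped with $W^+(0)=0$, $W^+(1)=1$. Decision weights: $h^+_j:=W^+\!\left(\frac{n^+-j+1}{N}\right)-W^+\!\left(\frac{n^+-j}{N}\right)$ for $j=1,\dots,n^+$. The transitional index is $J:=\min\{j\in\{1,\dots,n^+\}: j\,h^+_{j+1}\ge \sum_{j'=1}^{j}h^+_{j'}\}$, with the convention $h^+_{n^++1}=\infty$. *)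

theory Defs
  imports "HOL-Analysis.Analysis"
begin

definition inverse_S_shaped :: "(real \<Rightarrow> real) \<Rightarrow> bool" where
  "inverse_S_shaped f \<longleftrightarrow>
     strict_mono_on {0..1} f \<and>
     (\<exists>f'. (\<forall>x\<in>{0..1}. (f has_real_derivative f' x) (at x within {0..1})) \<and>
           continuous_on {0..1} f' \<and>
           (\<exists>x0\<in>{0..1}. strict_antimono_on {0..x0} f' \<and> strict_mono_on {x0..1} f'))"

definition hplus :: "(real \<Rightarrow> real) \<Rightarrow> nat \<Rightarrow> nat \<Rightarrow> nat \<Rightarrow> real" where
  "hplus W N np j = W ((real np - real j + 1) / real N) - W ((real np - real j) / real N)"

text \<open>Transitional index; the convention h_{np+1} = \<infinity> makes the condition true at j = np.\<close>
definition trans_index :: "(real \<Rightarrow> real) \<Rightarrow> nat \<Rightarrow> nat \<Rightarrow> nat" where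
  "trans_index W N np = (LEAST j. 1 \<le> j \<and> j \<le> np \<and>
      (j = np \<or> real j * hplus W N np (j + 1) \<ge> (\<Sum>j'=1..j. hplus W N np j')))"

definition feasible :: "(real \<Rightarrow> real) \<Rightarrow> nat \<Rightarrow> nat \<Rightarrow> real \<Rightarrow> (nat \<Rightarrow> real) set" where
  "feasible W N np v = {y. 0 \<le> y 1 \<and> (\<forall>j\<in>{1..<np}. y j \<le> y (j + 1)) \<and>
      (\<Sum>j=1..np. hplus W N np j * y j) = v}"

definition objective :: "real \<Rightarrow> nat \<Rightarrow> (nat \<Rightarrow> real) \<Rightarrow> real" where
  "objective \<alpha> np y = (\<Sum>j=1..np. y j powr (1 / \<alpha>))"

end

theory Submission
  imports Defs
begin

(* Since W' first decreases and then increases, the mean value theorem shows that the increment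
   W(x + 1/N) - W(x) is strictly quasiconvex in x, so the decision weights h_j first decrease and
   then increase in j.  Together with the defining property of J this makes the pooled weights
   g_j (the average of h_1..h_J for j <= J, and h_j for j > J) nondecreasing in j.  By Abel
   summation every nondecreasing y satisfies sum g_j y_j >= sum h_j y_j = v, with equality when
   y is constant on 1..J.  Hence the problem is bounded below by the relaxed problem
   min sum y_j^(1/alpha) s.t. sum g_j y_j >= v, y >= 0, whose minimiser is proportional to
   g_j^(alpha/(1-alpha)) by the tangent-line (Hoelder) argument; that minimiser is nondecreasing
   and constant on 1..J, hence feasible for the original problem. *)

lemma powr_above_tangent:
  fixes x c p :: real
  assumes "1 < p" "0 \<le> x" "0 \<le> c"
  shows "c powr p + p * c powr (p - 1) * (x - c) \<le> x powr p"
proof -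
  define r where "r = p / (p - 1)"
  have r: "1 < r" "1 / p + 1 / r = 1" using assms(1) by (auto simp: r_def field_simps)
  have "x * c powr (p - 1) \<le> x powr p / p + (c powr (p - 1)) powr r / r"
    using Youngs_inequality[OF assms(1) r assms(2)] assms(3) by simp
  also have "(c powr (p - 1)) powr r = c powr p"
    using assms(1) by (simp add: powr_powr r_def)
  finally have "p * x * c powr (p - 1) \<le> x powr p + (p - 1) * c powr p"
    using assms(1) by (simp add: r_def field_simps)
  moreover have "c * c powr (p - 1) = c powr p"
    using assms(3) by (simp add: powr_mult_base)
  ultimately show ?thesis by (simp add: algebra_simps)
qed

lemma powr_sum_minimiser:
  fixes g :: "'a \<Rightarrow> real"
  assumes "finite I" "I \<noteq> {}" "1 < p" "0 \<le> v" and g_pos: "\<And>i. i \<in> I \<Longrightarrow> 0 < g i"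
  defines "M \<equiv> \<Sum>i\<in>I. g i powr (p / (p - 1))"
  shows "(\<Sum>i\<in>I. g i * (v / M * g i powr (1 / (p - 1)))) = v"
    and "(\<Sum>i\<in>I. (v / M * g i powr (1 / (p - 1))) powr p) = v powr p / M powr (p - 1)"
proof -
  have M_pos: "0 < M" unfolding M_def using assms by (intro sum_pos) (auto dest!: g_pos)
  have "(\<Sum>i\<in>I. g i * (v / M * g i powr (1 / (p - 1)))) = v / M * (\<Sum>i\<in>I. g i powr (p / (p - 1)))"
    unfolding sum_distrib_left
  proof (rule sum.cong)
    fix i assume "i \<in> I"
    then have "g i * g i powr (1 / (p - 1)) = g i powr (1 + 1 / (p - 1))"
      using g_pos by (simp add: powr_mult_base less_imp_le)
    also have "1 + 1 / (p - 1) = p / (p - 1)"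
      using assms(3) by (simp add: field_simps)
    finally have "g i * g i powr (1 / (p - 1)) = g i powr (p / (p - 1))" .
    then show "g i * (v / M * g i powr (1 / (p - 1))) = v / M * g i powr (p / (p - 1))"
      by (metis mult.left_commute)
  qed simp
  then show "(\<Sum>i\<in>I. g i * (v / M * g i powr (1 / (p - 1)))) = v"
    using M_pos by (simp add: M_def)
  have "(v / M * g i powr (1 / (p - 1))) powr p = (v / M) powr p * g i powr (p / (p - 1))"
    if "i \<in> I" for i
    using g_pos[OF that] M_pos assms(4) by (subst powr_mult) (simp_all add: powr_powr)
  then have "(\<Sum>i\<in>I. (v / M * g i powr (1 / (p - 1))) powr p) = (v / M) powr p * M"
    by (simp add: M_def sum_distrib_left cong: sum.cong)
  also have "\<dots> = v powr p / M powr (p - 1)"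
    using M_pos assms(4) by (simp add: powr_divide powr_diff field_simps)
  finally show "(\<Sum>i\<in>I. (v / M * g i powr (1 / (p - 1))) powr p) = v powr p / M powr (p - 1)" .
qed

lemma powr_sum_lower_bound:
  fixes g y :: "'a \<Rightarrow> real"
  assumes "finite I" "I \<noteq> {}" "1 < p" "0 \<le> v" and g_pos: "\<And>i. i \<in> I \<Longrightarrow> 0 < g i"
    and y_nonneg: "\<And>i. i \<in> I \<Longrightarrow> 0 \<le> y i" and constraint: "v \<le> (\<Sum>i\<in>I. g i * y i)"
  defines "M \<equiv> \<Sum>i\<in>I. g i powr (p / (p - 1))"
  shows "v powr p / M powr (p - 1) \<le> (\<Sum>i\<in>I. y i powr p)"
proof -
  define t where "t = v / M"
  define y0 where "y0 i = t * g i powr (1 / (p - 1))" for i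
  have M_pos: "0 < M" unfolding M_def using assms by (intro sum_pos) (auto dest!: g_pos)
  have y0: "(\<Sum>i\<in>I. g i * y0 i) = v" "(\<Sum>i\<in>I. y0 i powr p) = v powr p / M powr (p - 1)"
    using powr_sum_minimiser[OF assms(1-4) g_pos] by (simp_all add: y0_def t_def M_def)
  have t_nonneg: "0 \<le> t" using M_pos assms(4) by (simp add: t_def)
  \<comment> \<open>The gradient of the objective at y0 is proportional to g.\<close>
  have gradient: "y0 i powr (p - 1) = t powr (p - 1) * g i" if "i \<in> I" for i
    using g_pos[OF that] t_nonneg assms(3) by (simp add: y0_def powr_mult powr_powr)
  have "(\<Sum>i\<in>I. y0 i powr p + p * (t powr (p - 1) * g i) * (y i - y0 i)) \<le> (\<Sum>i\<in>I. y i powr p)"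
  proof (rule sum_mono)
    fix i assume i: "i \<in> I"
    have "0 \<le> y0 i" using t_nonneg by (simp add: y0_def)
    from powr_above_tangent[OF assms(3) y_nonneg[OF i] this]
    show "y0 i powr p + p * (t powr (p - 1) * g i) * (y i - y0 i) \<le> y i powr p"
      by (simp add: gradient[OF i])
  qed
  moreover have "(\<Sum>i\<in>I. y0 i powr p + p * (t powr (p - 1) * g i) * (y i - y0 i))
      = (\<Sum>i\<in>I. y0 i powr p) + p * t powr (p - 1) * ((\<Sum>i\<in>I. g i * y i) - (\<Sum>i\<in>I. g i * y0 i))"
    by (simp add: sum.distrib sum_distrib_left sum_subtractf algebra_simps)
  moreover have "0 \<le> p * t powr (p - 1) * ((\<Sum>i\<in>I. g i * y i) - (\<Sum>i\<in>I. g i * y0 i))"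
    using y0(1) constraint assms(3) by simp
  ultimately show ?thesis using y0(2) by linarith
qed

lemma sum_split_at:
  fixes f :: "nat \<Rightarrow> 'a::comm_monoid_add"
  assumes "J \<le> n"
  shows "(\<Sum>j=1..n. f j) = (\<Sum>j=1..J. f j) + (\<Sum>j=J+1..n. f j)"
  using assms by (subst sum.union_disjoint[symmetric]) (auto intro: sum.cong)

lemma abel_summation_ge:
  fixes d y :: "nat \<Rightarrow> real"
  assumes "\<And>k. k < n \<Longrightarrow> (\<Sum>i=1..k. d i) \<le> 0"
    and "\<And>i. 1 \<le> i \<Longrightarrow> i < n \<Longrightarrow> y i \<le> y (i + 1)"
  shows "(\<Sum>i=1..n. d i) * y n \<le> (\<Sum>i=1..n. d i * y i)"
  using assms
proof (induction n)
  case 0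
  then show ?case by simp
next
  case (Suc n)
  have "(\<Sum>i=1..n. d i) * y (Suc n) \<le> (\<Sum>i=1..n. d i) * y n"
  proof (cases "n = 0")
    case False
    then show ?thesis using Suc.prems by (simp add: mult_left_mono_neg)
  qed simp
  also have "\<dots> \<le> (\<Sum>i=1..n. d i * y i)"
    using Suc by simp
  finally show ?case by (simp add: algebra_simps)
qed

definition pooled_weight :: "(nat \<Rightarrow> real) \<Rightarrow> nat \<Rightarrow> nat \<Rightarrow> real" where
  "pooled_weight h J j = (if j \<le> J then (\<Sum>i=1..J. h i) / real J else h j)"

lemma sum_pooled_weight_ge:
  fixes h y :: "nat \<Rightarrow> real"
  assumes "J \<le> n"
    and avg: "\<And>k. k \<le> J \<Longrightarrow> real k * (\<Sum>i=1..J. h i) \<le> real J * (\<Sum>i=1..k. h i)"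
    and y_mono: "\<And>j. 1 \<le> j \<Longrightarrow> j < n \<Longrightarrow> y j \<le> y (j + 1)"
  shows "(\<Sum>j=1..n. h j * y j) \<le> (\<Sum>j=1..n. pooled_weight h J j * y j)"
proof -
  define A where "A = (\<Sum>i=1..J. h i) / real J"
  have "0 \<le> (\<Sum>j=1..J. (A - h j) * y j)"
  proof (cases "J = 0")
    case False
    have "(\<Sum>i=1..k. A - h i) \<le> 0" if "k < J" for k
    proof -
      have "real k * A \<le> (\<Sum>i=1..k. h i)"
        using avg[of k] that False by (simp add: A_def field_simps)
      then show ?thesis by (simp add: sum_subtractf)
    qed
    then have "(\<Sum>i=1..J. A - h i) * y J \<le> (\<Sum>i=1..J. (A - h i) * y i)"
      using y_mono assms(1) by (intro abel_summation_ge) auto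
    then show ?thesis using False by (simp add: sum_subtractf A_def)
  qed simp
  also have "(\<Sum>j=1..J. (A - h j) * y j) = (\<Sum>j=1..n. (pooled_weight h J j - h j) * y j)"
    using sum_split_at[OF assms(1), of "\<lambda>j. (pooled_weight h J j - h j) * y j"]
    by (simp add: pooled_weight_def A_def)
  finally show ?thesis by (simp add: algebra_simps sum_subtractf)
qed

lemma sum_pooled_weight_eq:
  fixes h y :: "nat \<Rightarrow> real"
  assumes "J \<le> n" and y_const: "\<And>j. 1 \<le> j \<Longrightarrow> j \<le> J \<Longrightarrow> y j = c"
  shows "(\<Sum>j=1..n. pooled_weight h J j * y j) = (\<Sum>j=1..n. h j * y j)"
proof -
  have "(\<Sum>j=1..J. pooled_weight h J j * y j) = (\<Sum>j=1..J. h j * y j)"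
  proof (cases "J = 0")
    case False
    have "(\<Sum>j=1..J. pooled_weight h J j * y j) = (\<Sum>i=1..J. h i) * c"
      using False y_const by (simp add: pooled_weight_def)
    also have "\<dots> = (\<Sum>j=1..J. h j * y j)"
      using y_const by (simp add: sum_distrib_right)
    finally show ?thesis .
  qed simp
  moreover have "(\<Sum>j=J+1..n. pooled_weight h J j * y j) = (\<Sum>j=J+1..n. h j * y j)"
    by (rule sum.cong) (auto simp: pooled_weight_def)
  ultimately show ?thesis
    using sum_split_at[OF assms(1), of "\<lambda>j. pooled_weight h J j * y j"]
      sum_split_at[OF assms(1), of "\<lambda>j. h j * y j"] by simp
qed

lemma pooled_weight_pos:
  fixes h :: "nat \<Rightarrow> real"
  assumes "1 \<le> J" "J \<le> n" "\<And>j. 1 \<le> j \<Longrightarrow> j \<le> n \<Longrightarrow> 0 < h j" "1 \<le> j" "j \<le> n"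
  shows "0 < pooled_weight h J j"
proof (cases "j \<le> J")
  case True
  have "0 < (\<Sum>i=1..J. h i)" using assms(1-3) by (intro sum_pos) auto
  then show ?thesis using True assms(1) by (simp add: pooled_weight_def)
qed (use assms in \<open>simp add: pooled_weight_def\<close>)

lemma pooled_weight_mono_step:
  fixes h :: "nat \<Rightarrow> real"
  assumes "1 \<le> J" and jump: "J < n \<Longrightarrow> (\<Sum>i=1..J. h i) \<le> real J * h (J + 1)"
    and tail: "\<And>j. J \<le> j \<Longrightarrow> j < n \<Longrightarrow> h j \<le> h (j + 1)" and "j < n"
  shows "pooled_weight h J j \<le> pooled_weight h J (j + 1)"
proof -
  consider "j < J" | "j = J" | "J < j" by linarith
  then show ?thesis
  proof cases
    case 2
    then show ?thesis using jump assms(1,4) by (simp add: pooled_weight_def pos_divide_le_eq mult.commute)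
  next
    case 3
    then show ?thesis using tail assms(4) by (simp add: pooled_weight_def)
  qed (simp add: pooled_weight_def)
qed

lemma monotone_powr_sum_min:
  fixes h :: "nat \<Rightarrow> real" and \<alpha> v :: real and J n :: nat
  assumes \<alpha>: "0 < \<alpha>" "\<alpha> < 1" and v: "0 \<le> v" and J: "1 \<le> J" "J \<le> n"
    and h_pos: "\<And>j. 1 \<le> j \<Longrightarrow> j \<le> n \<Longrightarrow> 0 < h j"
    and avg: "\<And>k. k \<le> J \<Longrightarrow> real k * (\<Sum>i=1..J. h i) \<le> real J * (\<Sum>i=1..k. h i)"
    and g_mono: "\<And>j. 1 \<le> j \<Longrightarrow> j < n \<Longrightarrow> pooled_weight h J j \<le> pooled_weight h J (j + 1)"
  defines "Y \<equiv> {y. 0 \<le> y 1 \<and> (\<forall>j\<in>{1..<n}. y j \<le> y (j + 1)) \<and> (\<Sum>j=1..n. h j * y j) = v}"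
    and "val \<equiv> v powr (1 / \<alpha>) /
      (\<Sum>j=1..n. pooled_weight h J j powr (1 / (1 - \<alpha>))) powr ((1 - \<alpha>) / \<alpha>)"
  shows "(\<exists>y\<in>Y. (\<Sum>j=1..n. y j powr (1 / \<alpha>)) = val) \<and>
         (\<forall>y\<in>Y. val \<le> (\<Sum>j=1..n. y j powr (1 / \<alpha>)))"
proof -
  let ?g = "pooled_weight h J"
  define p where "p = 1 / \<alpha>"
  have p: "1 < p" "p / (p - 1) = 1 / (1 - \<alpha>)" "p - 1 = (1 - \<alpha>) / \<alpha>"
    using \<alpha> by (auto simp: p_def field_simps)
  define M where "M = (\<Sum>j=1..n. ?g j powr (1 / (1 - \<alpha>)))"
  have val_M: "val = v powr p / M powr (p - 1)"
    unfolding val_def M_def p(3) by (simp add: p_def)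
  have I: "finite {1..n}" "{1..n} \<noteq> {}" using J by auto
  have g_pos: "0 < ?g j" if "j \<in> {1..n}" for j
    using pooled_weight_pos[OF J h_pos] that by simp
  note minimiser = powr_sum_minimiser[where g = "pooled_weight h J", OF I p(1) v g_pos,
      unfolded p(2) M_def[symmetric]]
  define y0 where "y0 j = v / M * ?g j powr (1 / (p - 1))" for j
  have y0_in: "y0 \<in> Y"
  proof -
    have "0 \<le> M" unfolding M_def by (intro sum_nonneg) simp
    then have "0 \<le> v / M" using v by simp
    then have "y0 j \<le> y0 (j + 1)" if "j \<in> {1..<n}" for j
      unfolding y0_def using that g_mono[of j] g_pos[of j] p(1)
      by (intro mult_left_mono powr_mono2) auto
    moreover have "(\<Sum>j=1..n. h j * y0 j) = (\<Sum>j=1..n. ?g j * y0 j)"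
      using J by (intro sum_pooled_weight_eq[symmetric]) (auto simp: y0_def pooled_weight_def)
    moreover have "(\<Sum>j=1..n. ?g j * y0 j) = v"
      using minimiser(1) by (simp add: y0_def)
    moreover have "0 \<le> y0 1"
      unfolding y0_def using \<open>0 \<le> v / M\<close> by (intro mult_nonneg_nonneg) auto
    ultimately show ?thesis by (simp add: Y_def)
  qed
  moreover have y0_val: "(\<Sum>j=1..n. y0 j powr p) = val"
    using minimiser(2) by (simp add: y0_def val_M)
  moreover have lower: "val \<le> (\<Sum>j=1..n. y j powr p)" if "y \<in> Y" for y
  proof -
    have y: "0 \<le> y 1" "\<And>j. 1 \<le> j \<Longrightarrow> j < n \<Longrightarrow> y j \<le> y (j + 1)" "(\<Sum>j=1..n. h j * y j) = v"
      using that unfolding Y_def by auto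
    have "y 1 \<le> y j" if "1 \<le> j" "j \<le> n" for j
      using that(1)
    proof (induction j rule: dec_induct)
      case (step m)
      then show ?case using y(2)[of m] that(2) by simp
    qed simp
    then have "0 \<le> y j" if "j \<in> {1..n}" for j
      using order.trans[OF y(1)] that by simp
    moreover have "v \<le> (\<Sum>j=1..n. ?g j * y j)"
      using sum_pooled_weight_ge[where h = h and y = y, OF J(2) avg y(2)] y(3) by simp
    ultimately have "v powr p / M powr (p - 1) \<le> (\<Sum>j=1..n. y j powr p)"
      using powr_sum_lower_bound[where g = "pooled_weight h J" and y = y, OF I p(1) v g_pos]
      by (simp add: p(2) M_def)
    then show ?thesis by (simp add: val_M)
  qed
  ultimately show ?thesis unfolding p_def[symmetric] by auto
qed

lemma pooled_value_eq:
  fixes h :: "nat \<Rightarrow> real"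
  assumes \<alpha>: "0 < \<alpha>" "\<alpha> < 1" and J: "1 \<le> J" "J \<le> n"
    and h_nonneg: "\<And>j. 1 \<le> j \<Longrightarrow> j \<le> n \<Longrightarrow> 0 \<le> h j"
  shows "v powr (1 / \<alpha>) * real J /
      ((((\<Sum>j=1..J. h j) powr (1 / (1 - \<alpha>))) +
        (\<Sum>j=J+1..n. (real J powr \<alpha> * h j) powr (1 / (1 - \<alpha>)))) powr ((1 - \<alpha>) / \<alpha>))
    = v powr (1 / \<alpha>) / (\<Sum>j=1..n. pooled_weight h J j powr (1 / (1 - \<alpha>))) powr ((1 - \<alpha>) / \<alpha>)"
proof -
  define e where "e = 1 / (1 - \<alpha>)"
  define A where "A = (\<Sum>j=1..J. h j) / real J"
  define T where "T = (\<Sum>j=J+1..n. h j powr e)"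
  define M where "M = (\<Sum>j=1..n. pooled_weight h J j powr e)"
  have J_pos: "0 < real J" using J by simp
  have A_nonneg: "0 \<le> A"
    unfolding A_def using h_nonneg J by (intro divide_nonneg_nonneg sum_nonneg) auto
  have e: "e = \<alpha> * e + 1" using \<alpha> by (simp add: e_def field_simps)
  have M_split: "M = real J * A powr e + T"
  proof -
    have "(\<Sum>j=J+1..n. pooled_weight h J j powr e) = T"
      unfolding T_def by (rule sum.cong) (auto simp: pooled_weight_def)
    then show ?thesis
      using sum_split_at[OF J(2), of "\<lambda>j. pooled_weight h J j powr e"]
      by (simp add: M_def A_def pooled_weight_def)
  qed
  have head: "(\<Sum>j=1..J. h j) powr e = real J powr (\<alpha> * e) * (real J * A powr e)"
  proof -
    have "(\<Sum>j=1..J. h j) powr e = real J powr e * A powr e"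
      using J_pos A_nonneg by (simp add: A_def powr_mult[symmetric])
    also have "real J powr e = real J powr (\<alpha> * e) * real J"
      using J_pos by (subst e) (simp add: powr_add)
    finally show ?thesis by simp
  qed
  have tail: "(\<Sum>j=J+1..n. (real J powr \<alpha> * h j) powr e) = real J powr (\<alpha> * e) * T"
    unfolding T_def sum_distrib_left
    using h_nonneg J by (intro sum.cong refl) (simp add: powr_mult powr_powr)
  have "(real J powr (\<alpha> * e) * M) powr ((1 - \<alpha>) / \<alpha>) = real J * M powr ((1 - \<alpha>) / \<alpha>)"
    using J_pos \<alpha> by (simp add: M_def powr_mult powr_powr e_def sum_nonneg)
  moreover have "(\<Sum>j=1..J. h j) powr e + (\<Sum>j=J+1..n. (real J powr \<alpha> * h j) powr e)
      = real J powr (\<alpha> * e) * M"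
    using head tail M_split by (simp add: algebra_simps)
  ultimately show ?thesis
    unfolding e_def[symmetric] M_def[symmetric] using J_pos by simp
qed

lemma valley_increment_pos:
  fixes f :: "real \<Rightarrow> real"
  assumes valley: "strict_antimono_on {0..x0} f" "strict_mono_on {x0..1} f"
    and "0 < \<delta>" "0 \<le> s" "s < t" "t + \<delta> \<le> 1" and incr: "f s \<le> f (s + \<delta>)"
  shows "f t < f (t + \<delta>)"
proof (cases "x0 \<le> t")
  case True
  then show ?thesis using assms by (intro strict_mono_onD[OF valley(2)]) auto
next
  case False
  have "x0 < s + \<delta>"
  proof (rule ccontr)
    assume "\<not> x0 < s + \<delta>"
    then have "f (s + \<delta>) < f s" using assms by (intro monotone_onD[OF valley(1)]) auto
    then show False using incr by simp
  qed
  have "f t < f s" using False assms by (intro monotone_onD[OF valley(1)]) auto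
  moreover have "f (s + \<delta>) < f (t + \<delta>)"
    using \<open>x0 < s + \<delta>\<close> assms by (intro strict_mono_onD[OF valley(2)]) auto
  ultimately show ?thesis using incr by simp
qed

lemma increment_mean_value:
  fixes W W' :: "real \<Rightarrow> real"
  assumes der: "\<And>x. x \<in> {0..1} \<Longrightarrow> (W has_real_derivative W' x) (at x within {0..1})"
    and "0 < \<delta>" "0 \<le> a" "a < b" "b + \<delta> \<le> 1"
  obtains z where "a < z" "z < b"
    "(W (b + \<delta>) - W b) - (W (a + \<delta>) - W a) = (b - a) * (W' (z + \<delta>) - W' z)"
proof -
  let ?g = "\<lambda>x. W (x + \<delta>) - W x"
  have W_cont: "continuous_on {0..1} W"
    using der by (intro DERIV_continuous_on) auto
  have g_cont: "continuous_on {a..b} ?g"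
    using assms(2-5)
    by (intro continuous_on_diff continuous_on_compose2[OF W_cont] continuous_on_subset[OF W_cont]
        continuous_intros) auto
  have W_deriv: "(W has_real_derivative W' x) (at x)" if "0 < x" "x < 1" for x
    using der[of x] that by (simp add: at_within_interior[of x "{0..1}"])
  then have g_deriv: "(?g has_real_derivative W' (x + \<delta>) - W' x) (at x)" if "a < x" "x < b" for x
    using that assms(2-5) W_deriv[of "x + \<delta>"]
    by (intro derivative_intros DERIV_shift[THEN iffD1]) (auto simp: add.commute)
  obtain z where "a < z" "z < b" "?g b - ?g a = (W' (z + \<delta>) - W' z) * (b - a)"
    using mvt[OF \<open>a < b\<close> g_cont g_deriv[unfolded has_field_derivative_def]] by blast
  then show ?thesis using that by (simp add: mult.commute)
qed

lemma inverse_S_shaped_increment_quasiconvex: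
  fixes W :: "real \<Rightarrow> real"
  assumes "inverse_S_shaped W" "0 < \<delta>" "0 \<le> a" "a < b" "b < c" "c + \<delta> \<le> 1"
  shows "W (b + \<delta>) - W b < max (W (a + \<delta>) - W a) (W (c + \<delta>) - W c)"
proof -
  obtain W' x0 where der: "\<And>x. x \<in> {0..1} \<Longrightarrow> (W has_real_derivative W' x) (at x within {0..1})"
    and valley: "strict_antimono_on {0..x0} W'" "strict_mono_on {x0..1} W'"
    using assms(1) unfolding inverse_S_shaped_def by blast
  obtain z1 where z1: "a < z1" "z1 < b"
    "(W (b + \<delta>) - W b) - (W (a + \<delta>) - W a) = (b - a) * (W' (z1 + \<delta>) - W' z1)"
    using increment_mean_value[OF der assms(2,3,4)] assms(5,6) by auto
  obtain z2 where z2: "b < z2" "z2 < c"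
    "(W (c + \<delta>) - W c) - (W (b + \<delta>) - W b) = (c - b) * (W' (z2 + \<delta>) - W' z2)"
    using increment_mean_value[OF der assms(2), of b c] assms(3-6) by auto
  show ?thesis
  proof (rule ccontr)
    assume contra: "\<not> ?thesis"
    then have "0 \<le> (b - a) * (W' (z1 + \<delta>) - W' z1)"
      using z1(3) by simp
    then have "W' z1 \<le> W' (z1 + \<delta>)"
      using assms(4) by (simp add: zero_le_mult_iff)
    then have "W' z2 < W' (z2 + \<delta>)"
      using z1 z2 assms(2-6) by (intro valley_increment_pos[OF valley]) auto
    then have "0 < (c - b) * (W' (z2 + \<delta>) - W' z2)"
      using assms(5) by simp
    then show False
      using contra z2(3) by simp
  qed
qed

lemma hplus_pos:
  assumes "strict_mono_on {0..1} W" "1 \<le> j" "j \<le> np" "np \<le> N"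
  shows "0 < hplus W N np j"
proof -
  have "W ((real np - real j) / real N) < W ((real np - real j + 1) / real N)"
    using assms by (intro strict_mono_onD[OF assms(1)]) (auto simp: divide_simps)
  then show ?thesis by (simp add: hplus_def)
qed

lemma hplus_quasiconvex:
  assumes "inverse_S_shaped W" "1 < j" "j < np" "np \<le> N"
  shows "hplus W N np j < max (hplus W N np (j - 1)) (hplus W N np (j + 1))"
proof -
  define x where "x k = (real np - real k) / real N" for k
  have hplus_x: "hplus W N np k = W (x k + 1 / real N) - W (x k)" for k
    by (simp add: hplus_def x_def add_divide_distrib)
  have "x (j + 1) < x j" "x j < x (j - 1)" "0 \<le> x (j + 1)" "x (j - 1) + 1 / real N \<le> 1"
    using assms(2-4) by (auto simp: x_def of_nat_diff divide_simps)
  moreover have "0 < 1 / real N" using assms(3,4) by simp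
  ultimately show ?thesis
    unfolding hplus_x max.commute[of "W (x (j - 1) + 1 / real N) - W (x (j - 1))"]
    by (intro inverse_S_shaped_increment_quasiconvex[OF assms(1)])
qed

lemma quasiconvex_seq_mono_from:
  fixes h :: "nat \<Rightarrow> 'a::linorder"
  assumes qc: "\<And>j. a < j \<Longrightarrow> j < b \<Longrightarrow> h j < max (h (j - 1)) (h (j + 1))"
    and "a \<le> k" "k \<le> j" "j < b" and "h k \<le> h (k + 1)"
  shows "h j \<le> h (j + 1)"
  using \<open>k \<le> j\<close> \<open>j < b\<close>
proof (induction j rule: dec_induct)
  case base
  then show ?case using assms(5) by simp
next
  case (step m)
  then have "h (Suc m) < max (h m) (h (Suc m + 1))"
    using qc[of "Suc m"] \<open>a \<le> k\<close> by simp
  then show ?case using step by (simp add: max_def split: if_splits)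
qed

lemma quasiconvex_seq_less_before:
  fixes h :: "nat \<Rightarrow> 'a::linorder"
  assumes qc: "\<And>j. a < j \<Longrightarrow> j < b \<Longrightarrow> h j < max (h (j - 1)) (h (j + 1))"
    and "a \<le> i" "i \<le> k" "k < b" and "h (k + 1) < h k"
  shows "h (k + 1) < h i"
proof -
  have "h (k + 1) < h i \<and> h (i + 1) < h i"
    using \<open>i \<le> k\<close>
  proof (induction i rule: inc_induct)
    case base
    then show ?case using assms(5) by simp
  next
    case (step m)
    then have "h (Suc m) < max (h m) (h (Suc m + 1))"
      using qc[of "Suc m"] \<open>a \<le> i\<close> \<open>k < b\<close> by simp
    then show ?case using step by (auto simp: max_def split: if_splits)
  qed
  then show ?thesis ..
qed

lemma partial_sum_average_le:
  fixes h :: "nat \<Rightarrow> real"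
  assumes before: "\<And>k. 1 \<le> k \<Longrightarrow> k < J \<Longrightarrow> real k * h (k + 1) < (\<Sum>i=1..k. h i)"
    and "k \<le> J"
  shows "real k * (\<Sum>i=1..J. h i) \<le> real J * (\<Sum>i=1..k. h i)"
proof (cases "k = 0")
  case False
  show ?thesis
    using \<open>k \<le> J\<close>
  proof (induction J rule: dec_induct)
    case (step m)
    have "real m * (real k * h (m + 1)) \<le> real k * (\<Sum>i=1..m. h i)"
      using before[of m] step False by (simp add: mult.left_commute mult_left_mono less_imp_le)
    also have "\<dots> \<le> real m * (\<Sum>i=1..k. h i)" using step.IH .
    finally have "real k * h (m + 1) \<le> (\<Sum>i=1..k. h i)"
      using step False by (simp add: mult_le_cancel_left)
    then show ?case using step.IH by (simp add: algebra_simps)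
  qed simp
qed simp

lemma trans_index_spec:
  fixes W :: "real \<Rightarrow> real" and N np :: nat
  assumes "1 \<le> np"
  defines "J \<equiv> trans_index W N np" and "h \<equiv> hplus W N np"
  shows "1 \<le> J \<and> J \<le> np \<and> (J < np \<longrightarrow> (\<Sum>j=1..J. h j) \<le> real J * h (J + 1))"
  unfolding J_def h_def trans_index_def
  by (rule LeastI2[where a = np]) (use assms in auto)

lemma trans_index_minimal:
  assumes "1 \<le> np" "1 \<le> k" "k < trans_index W N np"
  shows "real k * hplus W N np (k + 1) < (\<Sum>j=1..k. hplus W N np j)"
proof -
  have "k < np" using trans_index_spec[OF assms(1), of W N] assms(3) by linarith
  with assms show ?thesis
    using not_less_Least[of k] unfolding trans_index_def by fastforce
qed

lemma hplus_mono_from_trans_index: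
  assumes "inverse_S_shaped W" "1 \<le> np" "np \<le> N" "trans_index W N np \<le> j" "j < np"
  shows "hplus W N np j \<le> hplus W N np (j + 1)"
proof -
  define h where "h = hplus W N np"
  define J where "J = trans_index W N np"
  have qc: "\<And>j. 1 < j \<Longrightarrow> j < np \<Longrightarrow> h j < max (h (j - 1)) (h (j + 1))"
    unfolding h_def using hplus_quasiconvex[OF assms(1)] assms(3) by blast
  have J: "1 \<le> J" "J < np" "(\<Sum>i=1..J. h i) \<le> real J * h (J + 1)"
    using trans_index_spec[OF assms(2), of W N] assms(4,5) by (auto simp: h_def J_def)
  \<comment> \<open>Otherwise h would decrease strictly up to J + 1, so h (J + 1) would lie below
      the average of h 1 .. h J.\<close>
  have "h J \<le> h (J + 1)"
  proof (rule ccontr)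
    assume "\<not> h J \<le> h (J + 1)"
    then have "h (J + 1) < h i" if "i \<in> {1..J}" for i
      using quasiconvex_seq_less_before[OF qc] J that by simp
    then have "(\<Sum>i=1..J. h (J + 1)) < (\<Sum>i=1..J. h i)"
      using J by (intro sum_strict_mono) auto
    then show False using J by simp
  qed
  moreover have "J \<le> j" using assms(4) by (simp add: J_def)
  ultimately have "h j \<le> h (j + 1)"
    using quasiconvex_seq_mono_from[OF qc J(1) _ assms(5)] by blast
  then show ?thesis by (simp add: h_def)
qed

theorem corollary1:
  fixes N np :: nat and \<alpha> v :: real and W :: "real \<Rightarrow> real"
  assumes "0 < \<alpha>" "\<alpha> < 1" "1 \<le> np" "np \<le> N"
    and "inverse_S_shaped W" "W 0 = 0" "W 1 = 1"
    and "0 \<le> v"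
  defines "h \<equiv> hplus W N np" and "J \<equiv> trans_index W N np"
  defines "val \<equiv> v powr (1 / \<alpha>) * real J /
      ((((\<Sum>j=1..J. h j) powr (1 / (1 - \<alpha>))) +
        (\<Sum>j=J+1..np. (real J powr \<alpha> * h j) powr (1 / (1 - \<alpha>)))) powr ((1 - \<alpha>) / \<alpha>))"
  shows "(\<exists>y\<in>feasible W N np v. objective \<alpha> np y = val) \<and>
         (\<forall>y\<in>feasible W N np v. val \<le> objective \<alpha> np y)"
proof -
  have h_pos: "\<And>j. 1 \<le> j \<Longrightarrow> j \<le> np \<Longrightarrow> 0 < h j"
    using assms(4,5) hplus_pos unfolding h_def inverse_S_shaped_def by blast
  have J: "1 \<le> J" "J \<le> np" "J < np \<Longrightarrow> (\<Sum>j=1..J. h j) \<le> real J * h (J + 1)"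
    using trans_index_spec[OF assms(3), of W N] unfolding h_def J_def by auto
  have avg: "\<And>k. k \<le> J \<Longrightarrow> real k * (\<Sum>i=1..J. h i) \<le> real J * (\<Sum>i=1..k. h i)"
    using partial_sum_average_le trans_index_minimal[OF assms(3)] unfolding h_def J_def by blast
  have g_mono: "\<And>j. 1 \<le> j \<Longrightarrow> j < np \<Longrightarrow> pooled_weight h J j \<le> pooled_weight h J (j + 1)"
    using pooled_weight_mono_step[OF J(1) J(3)] hplus_mono_from_trans_index[OF assms(5,3,4)]
    unfolding h_def J_def by blast
  have "val = v powr (1 / \<alpha>) /
      (\<Sum>j=1..np. pooled_weight h J j powr (1 / (1 - \<alpha>))) powr ((1 - \<alpha>) / \<alpha>)"
    unfolding val_def using pooled_value_eq[OF assms(1,2) J(1,2)] h_pos by (simp add: less_imp_le)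
  then show ?thesis
    using monotone_powr_sum_min[OF assms(1,2,8) J(1,2) h_pos avg g_mono]
    unfolding feasible_def objective_def h_def by simp
qed

end
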